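(* Let $p$ be a prime. Then $2p$ is a GA1 number if and only if $p=2$ or $p>5$.
   Context: For a positive integer $n$, $\sigma(n)=\sum_{d\mid n} d$. For integers $n>1$ define $G(n)=\dfrac{\sigma(n)}{n\log\log n}$ (natural logarithms). A positive integer $n$ is a GA1 number (GA number of the first kind) if $n$ is composite and $G(n)\ge G(n/p)$ for every prime $p$ dividing $n$. *)

theory Defs
  imports "HOL-Computational_Algebra.Primes" Complex_Main
begin

definition divisor_sigma :: "nat \<Rightarrow> nat" where
  "divisor_sigma n = (\<Sum>d\<in>{d. d dvd n}. d)"

definition G :: "nat \<Rightarrow> real" where
  "G n = real (divisor_sigma n) / (real n * ln (ln (real n)))"

definition GA1 :: "nat \<Rightarrow> bool" where
  "GA1 n \<longleftrightarrow> n > 1 \<and> \<not> prime n \<and> (\<forall>p. prime p \<and> p dvd n \<longrightarrow> G n \<ge> G (n div p))"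

end

theory Submission
  imports Defs "HOL-Analysis.Harmonic_Numbers"
begin

(* The only prime divisors of 2p are 2 and p, with cofactors p and 2.
   Since ln (ln 2) < 0 we have G 2 < 0, while G n > 0 for n >= 3; hence
   GA1 (2p) holds exactly when G p <= G (2p).  For p = 2 this is G 2 <= G 4, true.
   For odd p we have sigma (2p) = 3 (p + 1) = 3 sigma p, so with x = ln p the
   inequality G p <= G (2p) becomes 2 ln (ln 2 + x) <= 3 ln x, i.e.
   (ln 2 + x)^2 <= x^3.  Two elementary estimates, using only the library bounds
   2/3 <= ln 2 <= 25/36, show that this cubic inequality fails whenever
   3 x <= 7 ln 2 (which covers p = 3, 5 since 5^3 <= 2^7) and holds whenever
   14 ln 2 <= 5 x (which covers p >= 7 since 2^14 <= 7^5). *)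

lemma divisor_sigma_prime:
  assumes "prime (p::nat)"
  shows "divisor_sigma p = p + 1"
proof -
  have "{d. d dvd p} = {1, p}"
    using assms by (auto simp: prime_nat_iff)
  moreover have "p \<noteq> 1" using assms by auto
  ultimately show ?thesis by (simp add: divisor_sigma_def)
qed

lemma divisors_double_prime:
  assumes "prime (p::nat)"
  shows "{d. d dvd 2 * p} = {1, 2, p, 2 * p}"
proof (rule set_eqI, rule iffI)
  fix d assume "d \<in> {d. d dvd 2 * p}"
  hence d: "d dvd 2 * p" by simp
  show "d \<in> {1, 2, p, 2 * p}"
  proof (cases "p dvd d")
    case True
    then obtain k where k: "d = p * k" by blast
    with d have "k dvd 2" using assms by (auto simp: mult.commute prime_gt_0_nat)
    hence "k = 1 \<or> k = 2" using prime_nat_iff[of 2] by auto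
    thus ?thesis using k by auto
  next
    case False
    hence "coprime p d" using assms by (simp add: prime_imp_coprime)
    hence "d dvd 2" using d by (metis coprime_commute coprime_dvd_mult_left_iff)
    hence "d = 1 \<or> d = 2" using prime_nat_iff[of 2] by auto
    thus ?thesis by auto
  qed
qed auto

lemma divisor_sigma_double_odd_prime:
  assumes "prime (p::nat)" "p \<noteq> 2"
  shows "divisor_sigma (2 * p) = 3 * (p + 1)"
proof -
  have "p > 2" using assms prime_ge_2_nat[of p] by linarith
  hence "(\<Sum>d\<in>{1, 2, p, 2 * p}. d) = 3 * (p + 1)" by simp
  thus ?thesis using divisors_double_prime[OF assms(1)] by (simp add: divisor_sigma_def)
qed

text \<open>The sign of \<open>G\<close>: negative at 2 (because \<open>ln 2 < 1\<close>), positive from 3 on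
  (because \<open>ln 3 > 1\<close>).  This makes the divisor 2 of \<open>2p\<close> irrelevant.\<close>

lemma ln_ln_pos:
  assumes "real n \<ge> 3"
  shows "ln (ln (real n)) > 0"
proof -
  have "ln 3 \<le> ln (real n)" using assms by simp
  thus ?thesis using ln3_gt_1 by simp
qed

lemma G_two_neg: "G 2 < 0"
proof -
  have "ln (2::real) < 1" using ln2_le_25_over_36 by simp
  hence "ln (ln (2::real)) < 0" by simp
  thus ?thesis unfolding G_def using divisor_sigma_prime[of 2] by (simp add: divide_pos_neg)
qed

lemma G_pos:
  assumes "n \<ge> 3"
  shows "G n > 0"
proof -
  have "divisor_sigma n > 0" unfolding divisor_sigma_def using assms
    by (intro sum_pos2[where i=n]) (auto intro: finite_subset[of _ "{..n}"] dvd_imp_le)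
  thus ?thesis unfolding G_def using ln_ln_pos[of n] assms by simp
qed

lemma GA1_double_prime_iff:
  assumes "prime (p::nat)"
  shows "GA1 (2 * p) \<longleftrightarrow> G p \<le> G (2 * p)"
proof -
  have p2: "p \<ge> 2" using assms prime_ge_2_nat by blast
  have not_prime: "\<not> prime (2 * p)" using p2 prime_product[of 2 p] by auto
  have prime_divisors: "prime q \<and> q dvd 2 * p \<longleftrightarrow> q = 2 \<or> q = p" for q
  proof
    assume h: "prime q \<and> q dvd 2 * p"
    hence "q dvd 2 \<or> q dvd p" using prime_dvd_mult_iff by blast
    thus "q = 2 \<or> q = p" using h assms primes_dvd_imp_eq[of q 2] primes_dvd_imp_eq[of q p] by auto
  qed (use assms in auto)
  have "G 2 \<le> G (2 * p)" using G_two_neg G_pos[of "2 * p"] p2 by linarith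
  thus ?thesis unfolding GA1_def using not_prime p2 prime_divisors by auto
qed

lemma G_double_odd_prime_iff:
  assumes "prime p" "p \<noteq> 2"
  shows "G p \<le> G (2 * p) \<longleftrightarrow> (ln 2 + ln (real p))^2 \<le> ln (real p) ^ 3"
proof -
  have p3: "p \<ge> 3" using assms prime_ge_2_nat[of p] by linarith
  define A where "A = ln (real p)"
  define B where "B = ln (real (2 * p))"
  have B: "B = ln 2 + A" unfolding A_def B_def using p3 by (simp add: ln_mult)
  have lnA: "ln A > 0" unfolding A_def using p3 by (intro ln_ln_pos) simp
  have lnB: "ln B > 0" unfolding B_def using p3 by (intro ln_ln_pos) simp
  have pos: "A > 0" "B > 0" "real p > 0" unfolding A_def B_def using p3 by auto
  have "G p \<le> G (2 * p) \<longleftrightarrow> (real p + 1) / (real p * ln A) \<le> 3 * (real p + 1) / (2 * real p * ln B)"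
    unfolding G_def A_def B_def
    using divisor_sigma_double_odd_prime[OF assms] divisor_sigma_prime[OF assms(1)]
    by (simp add: algebra_simps)
  also have "\<dots> \<longleftrightarrow> ((real p + 1) * real p) * (2 * ln B) \<le> ((real p + 1) * real p) * (3 * ln A)"
    using lnA lnB pos by (simp add: divide_le_eq le_divide_eq algebra_simps)
  also have "\<dots> \<longleftrightarrow> 2 * ln B \<le> 3 * ln A"
    using pos by (intro mult_le_cancel_left_pos) simp
  also have "\<dots> \<longleftrightarrow> ln (B^2) \<le> ln (A^3)"
    using pos by (simp add: ln_realpow)
  also have "\<dots> \<longleftrightarrow> B^2 \<le> A^3" using pos by simp
  finally show ?thesis unfolding B A_def .
qed

lemma cubic_fails_small:
  fixes x :: real
  assumes "0 < x" "3 * x \<le> 7 * ln 2"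
  shows "x ^ 3 < (ln 2 + x)^2"
proof -
  define y where "y = ln (2::real)"
  have y: "y \<le> 25/36" "y > 0" unfolding y_def using ln2_le_25_over_36 by auto
  have x_le: "3 * x \<le> 7 * y" using assms(2) unfolding y_def .
  have "x * x^2 \<le> (7/4) * x^2" using x_le y by (intro mult_right_mono) auto
  hence cube: "x^3 \<le> (7/4) * x^2" by (simp add: power2_eq_square power3_eq_cube)
  have "x * x \<le> ((7/3) * y) * x" using x_le assms(1) by (intro mult_right_mono) auto
  hence square: "x^2 \<le> (7/3) * (x * y)" by (simp add: power2_eq_square algebra_simps)
  have "x * y > 0" "y^2 \<ge> 0" using assms(1) y by simp_all
  hence "x^3 < x^2 + 2 * (x * y) + y^2" using cube square by linarith
  thus ?thesis unfolding y_def by (simp add: power2_sum algebra_simps)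
qed

lemma cubic_holds_large:
  fixes x :: real
  assumes "14 * ln 2 \<le> 5 * x"
  shows "(ln 2 + x)^2 \<le> x ^ 3"
proof -
  define y where "y = ln (2::real)"
  have y: "2/3 \<le> y" unfolding y_def by (rule ln2_ge_two_thirds)
  have x_ge: "14 * y \<le> 5 * x" using assms unfolding y_def .
  have x_big: "x \<ge> 361/196" using x_ge y by simp
  have "y + x \<le> (19/14) * x" using x_ge by linarith
  hence "(y + x)^2 \<le> ((19/14) * x)^2" using x_ge y by (intro power_mono) auto
  also have "\<dots> = (361/196) * x^2" by (simp add: power2_eq_square)
  also have "\<dots> \<le> x * x^2" using x_big by (intro mult_right_mono) auto
  also have "\<dots> = x^3" by (simp add: power2_eq_square power3_eq_cube)
  finally show ?thesis unfolding y_def .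
qed

text \<open>Comparing logarithms of integers through integer powers; this places \<open>ln p\<close> in
  the range of the appropriate estimate.\<close>

lemma ln_le_of_pow_le:
  assumes "(a::nat) ^ m \<le> b ^ n" "a > 0" "b > 0"
  shows "real m * ln (real a) \<le> real n * ln (real b)"
proof -
  have "real a ^ m \<le> real b ^ n" using assms(1) by (metis of_nat_le_iff of_nat_power)
  hence "ln (real a ^ m) \<le> ln (real b ^ n)" using assms by simp
  thus ?thesis using assms by (simp add: ln_realpow)
qed

theorem proposition3:
  fixes p :: nat
  assumes "prime p"
  shows "GA1 (2 * p) \<longleftrightarrow> p = 2 \<or> p > 5"
proof (cases "p = 2")
  case True
  thus ?thesis using GA1_double_prime_iff[OF assms] G_two_neg G_pos[of 4] by simp
next
  case odd: False
  have GA1_iff: "GA1 (2 * p) \<longleftrightarrow> (ln 2 + ln (real p))^2 \<le> ln (real p) ^ 3"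
    using GA1_double_prime_iff[OF assms] G_double_odd_prime_iff[OF assms odd] by simp
  show ?thesis
  proof (cases "p > 5")
    case True
    have "p \<noteq> 6" using assms prime_product[of 2 3] by auto
    hence "ln 7 \<le> ln (real p)" using True by simp
    moreover have "14 * ln 2 \<le> 5 * ln (7::real)" using ln_le_of_pow_le[of 2 14 7 5] by simp
    ultimately have "14 * ln 2 \<le> 5 * ln (real p)" by linarith
    thus ?thesis using GA1_iff cubic_holds_large True by simp
  next
    case False
    hence "ln (real p) \<le> ln 5" using assms prime_gt_0_nat by simp
    moreover have "3 * ln 5 \<le> 7 * ln (2::real)" using ln_le_of_pow_le[of 5 3 2 7] by simp
    moreover have "ln (real p) > 0" using prime_gt_1_nat[OF assms] by simp
    ultimately show ?thesis using GA1_iff cubic_fails_small[of "ln (real p)"] odd False by simp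
  qed
qed

end
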